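(* Let $G$ be a finite simple graph with at least one edge, and let $R(G)$ be its regularization. Then $$\frac{|V(R(G))|}{\mathrm{es}_{\Delta}(R(G))}\leq \frac{|V(G)|}{\mathrm{es}_{\Delta}(G)}.$$
   Context: $\mathrm{es}_{\Delta}(H)$ is the minimum number of edges of $H$ whose removal results in a subgraph with maximum degree $\Delta(H)-1$. $\mathrm{core}(H)$ is the set of vertices of maximum degree in $H$. The regularization $R(G)$ is defined as follows. If $G$ is regular, $R(G)=G$. Otherwise, let $A_G=V(G)\setminus\mathrm{core}(G)$, and let $G^{(1)}$ be obtained from two disjoint copies $G'$ and $G''$ of $G$ by adding an edge between each vertex of $A_{G'}$ and its corresponding copy in $A_{G''}$ (so $\Delta(G^{(1)})=\Delta(G)$ and $\delta(G^{(1)})=\delta(G)+1$). Iterating this construction, $G^{(i+1)}=(G^{(i)})^{(1)}$, and $R(G)=G^{(\Delta(G)-\delta(G))}$, which is $\Delta(G)$-regular. *)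

theory Defs
  imports Complex_Main
begin

type_synonym 'v graph = "'v set \<times> 'v set set"

definition verts :: "'v graph \<Rightarrow> 'v set" where "verts G = fst G"
definition edges :: "'v graph \<Rightarrow> 'v set set" where "edges G = snd G"

definition finite_simple_graph :: "'v graph \<Rightarrow> bool" where
  "finite_simple_graph G \<longleftrightarrow> finite (verts G) \<and>
     (\<forall>e\<in>edges G. \<exists>u v. e = {u, v} \<and> u \<noteq> v \<and> u \<in> verts G \<and> v \<in> verts G)"

definition degree :: "'v graph \<Rightarrow> 'v \<Rightarrow> nat" where
  "degree G v = card {e \<in> edges G. v \<in> e}"

definition maxdeg :: "'v graph \<Rightarrow> nat" where
  "maxdeg G = Max (degree G ` verts G)"

definition mindeg :: "'v graph \<Rightarrow> nat" where
  "mindeg G = Min (degree G ` verts G)"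

definition core :: "'v graph \<Rightarrow> 'v set" where
  "core G = {v \<in> verts G. degree G v = maxdeg G}"

definition es_Delta :: "'v graph \<Rightarrow> nat" where
  "es_Delta G = (LEAST k. \<exists>F \<subseteq> edges G. card F = k \<and>
       maxdeg (verts G, edges G - F) = maxdeg G - 1)"

text \<open>Embedding a graph on 'a into vertex type 'a \<times> bool list (copy tags).\<close>
definition lift :: "'a graph \<Rightarrow> ('a \<times> bool list) graph" where
  "lift G = ((\<lambda>v. (v, [])) ` verts G, (\<lambda>e. (\<lambda>v. (v, [])) ` e) ` edges G)"

definition double :: "('a \<times> bool list) graph \<Rightarrow> ('a \<times> bool list) graph" where
  "double G =
    ({(v, b # bs) | v bs b. (v, bs) \<in> verts G},
     {(\<lambda>(v, bs). (v, b # bs)) ` e | e b. e \<in> edges G}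
     \<union> {{(v, True # bs), (v, False # bs)} | v bs. (v, bs) \<in> verts G - core G})"

definition regularization :: "('a \<times> bool list) graph \<Rightarrow> ('a \<times> bool list) graph" where
  "regularization G = (double ^^ (maxdeg G - mindeg G)) G"

end

theory Submission
  imports Defs
begin

text \<open>Doubling keeps the maximum degree \<Delta>: a vertex outside the core gains only the edge to
  its twin, and its degree was below \<Delta>. It doubles the number of vertices and at least doubles
  \<open>es_Delta\<close>: both copies of \<open>G\<close> sit inside the doubled graph, which has the same \<Delta>, so an
  edge set whose removal brings the doubled graph down to \<open>\<Delta> - 1\<close> meets each copy in a set
  doing the same for \<open>G\<close>, and these two parts are disjoint. After \<open>k = \<Delta> - \<delta>\<close> doublings
  the vertex count is multiplied by \<open>2\<^sup>k\<close> and \<open>es_Delta\<close> by at least \<open>2\<^sup>k\<close>.\<close>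

lemma verts_pair [simp]: "verts (V, E) = V"
  by (simp add: verts_def)

lemma edges_pair [simp]: "edges (V, E) = E"
  by (simp add: edges_def)

lemma verts_edges_pair [simp]: "(verts G, edges G) = G"
  by (simp add: verts_def edges_def)

lemma finite_verts: "finite_simple_graph G \<Longrightarrow> finite (verts G)"
  by (simp add: finite_simple_graph_def)

lemma finite_edges:
  assumes "finite_simple_graph G"
  shows "finite (edges G)"
proof -
  have "edges G \<subseteq> Pow (verts G)"
    using assms unfolding finite_simple_graph_def by fastforce
  moreover have "finite (Pow (verts G))"
    using assms by (simp add: finite_simple_graph_def)
  ultimately show ?thesis
    by (rule finite_subset)
qed

lemma edge_nonempty: "finite_simple_graph G \<Longrightarrow> e \<in> edges G \<Longrightarrow> e \<noteq> {}"
  unfolding finite_simple_graph_def by blast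

lemma degree_le_maxdeg:
  "finite (verts G) \<Longrightarrow> x \<in> verts G \<Longrightarrow> degree G x \<le> maxdeg G"
  unfolding maxdeg_def by simp

lemma maxdeg_leI:
  "finite (verts G) \<Longrightarrow> verts G \<noteq> {} \<Longrightarrow> (\<And>x. x \<in> verts G \<Longrightarrow> degree G x \<le> c)
    \<Longrightarrow> maxdeg G \<le> c"
  unfolding maxdeg_def by simp

lemma maxdeg_no_edges: "finite V \<Longrightarrow> V \<noteq> {} \<Longrightarrow> maxdeg (V, {}) = 0"
  using maxdeg_leI[of "(V, {})" 0] by (simp add: degree_def)

lemma
  assumes "finite_simple_graph G" and "edges G \<noteq> {}"
  shows verts_nonempty_if_edge: "verts G \<noteq> {}"
    and maxdeg_pos_if_edge: "0 < maxdeg G"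
proof -
  obtain e where "e \<in> edges G"
    using assms(2) by blast
  then obtain u v where uv: "{u, v} \<in> edges G" "u \<in> verts G"
    using assms(1) unfolding finite_simple_graph_def by metis
  then show "verts G \<noteq> {}" by blast
  have "{e \<in> edges G. u \<in> e} \<noteq> {}"
    using uv by blast
  then have "0 < degree G u"
    using finite_edges[OF assms(1)] by (simp add: degree_def card_gt_0_iff)
  also have "\<dots> \<le> maxdeg G"
    using assms(1) uv(2) by (simp add: degree_le_maxdeg finite_simple_graph_def)
  finally show "0 < maxdeg G" .
qed

lemma degree_le_Suc_degree_remove_edge:
  assumes "finite E"
  shows "degree (V, E) x \<le> Suc (degree (V, E - {e}) x)"
proof -
  have "{e' \<in> E. x \<in> e'} \<subseteq> insert e {e' \<in> E - {e}. x \<in> e'}"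
    by blast
  then have "card {e' \<in> E. x \<in> e'} \<le> card (insert e {e' \<in> E - {e}. x \<in> e'})"
    using assms by (intro card_mono) auto
  also have "\<dots> \<le> Suc (card {e' \<in> E - {e}. x \<in> e'})"
    using assms by (simp add: card_insert_if)
  finally show ?thesis
    by (simp add: degree_def)
qed

lemma maxdeg_le_Suc_maxdeg_remove_edge:
  assumes "finite V" "V \<noteq> {}" "finite E"
  shows "maxdeg (V, E) \<le> Suc (maxdeg (V, E - {e}))"
proof (rule maxdeg_leI)
  fix x assume "x \<in> verts (V, E)"
  then have "degree (V, E - {e}) x \<le> maxdeg (V, E - {e})"
    using assms by (simp add: degree_le_maxdeg)
  then show "degree (V, E) x \<le> Suc (maxdeg (V, E - {e}))"
    using degree_le_Suc_degree_remove_edge[OF assms(3), of V x e] by linarith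
qed (use assms in auto)

lemma maxdeg_intermediate_value:
  assumes "finite V" "V \<noteq> {}" "finite E" "finite F"
    and "maxdeg (V, E - F) \<le> d" "d \<le> maxdeg (V, E)"
  shows "\<exists>F' \<subseteq> F. maxdeg (V, E - F') = d"
  using assms(4-)
proof (induction F rule: finite_induct)
  case empty
  then show ?case by auto
next
  case (insert e F)
  show ?case
  proof (cases "maxdeg (V, E - F) \<le> d")
    case True
    with insert.IH insert.prems(2) show ?thesis by blast
  next
    case False
    have "E - F - {e} = E - insert e F" by blast
    then have "maxdeg (V, E - F) \<le> Suc (maxdeg (V, E - insert e F))"
      using maxdeg_le_Suc_maxdeg_remove_edge[of V "E - F" e] assms(1-3) by simp
    with False insert.prems(1) have "maxdeg (V, E - insert e F) = d" by linarith
    then show ?thesis by blast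
  qed
qed

text \<open>\<open>es_Delta\<close> asks for maximum degree exactly \<open>\<Delta> - 1\<close>; deleting a single edge lowers \<Delta>
  by at most one, so any deletion set reaching \<open>\<Delta> - 1\<close> or below contains one reaching it exactly.\<close>

lemma es_Delta_le_card:
  assumes G: "finite_simple_graph G" "edges G \<noteq> {}"
    and F: "F \<subseteq> edges G" "maxdeg (verts G, edges G - F) \<le> maxdeg G - 1"
  shows "es_Delta G \<le> card F"
proof -
  have fin: "finite (verts G)" "verts G \<noteq> {}" "finite (edges G)" "finite F"
    using finite_verts[OF G(1)] verts_nonempty_if_edge[OF G] finite_edges[OF G(1)]
      finite_subset[OF F(1) finite_edges[OF G(1)]] by blast+
  have "maxdeg G - 1 \<le> maxdeg (verts G, edges G)"
    by simp
  then obtain F' where F': "F' \<subseteq> F" "maxdeg (verts G, edges G - F') = maxdeg G - 1"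
    using maxdeg_intermediate_value[OF fin F(2)] by blast
  then have "es_Delta G \<le> card F'"
    unfolding es_Delta_def using F(1) by (intro Least_le) blast
  also have "\<dots> \<le> card F"
    using F'(1) fin(4) by (rule card_mono[rotated])
  finally show ?thesis .
qed

lemma es_Delta_attained:
  assumes G: "finite_simple_graph G" "edges G \<noteq> {}"
  obtains F where "F \<subseteq> edges G" "card F = es_Delta G"
    "maxdeg (verts G, edges G - F) = maxdeg G - 1"
proof -
  have fin: "finite (verts G)" "verts G \<noteq> {}" "finite (edges G)"
    using finite_verts[OF G(1)] verts_nonempty_if_edge[OF G] finite_edges[OF G(1)] by blast+
  have "maxdeg (verts G, edges G - edges G) \<le> maxdeg G - 1"
    using maxdeg_no_edges[OF fin(1,2)] by simp
  moreover have "maxdeg G - 1 \<le> maxdeg (verts G, edges G)"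
    by simp
  ultimately obtain F where "F \<subseteq> edges G" "maxdeg (verts G, edges G - F) = maxdeg G - 1"
    using maxdeg_intermediate_value[OF fin fin(3)] by blast
  then have "\<exists>F' \<subseteq> edges G. card F' = card F \<and> maxdeg (verts G, edges G - F') = maxdeg G - 1"
    by blast
  then have "\<exists>F' \<subseteq> edges G. card F' = es_Delta G \<and> maxdeg (verts G, edges G - F') = maxdeg G - 1"
    unfolding es_Delta_def by (rule LeastI)
  then show ?thesis
    using that by blast
qed

lemma es_Delta_pos:
  assumes "finite_simple_graph G" "edges G \<noteq> {}"
  shows "0 < es_Delta G"
proof (rule ccontr)
  assume "\<not> 0 < es_Delta G"
  obtain F where F: "F \<subseteq> edges G" "card F = 0" "maxdeg (verts G, edges G - F) = maxdeg G - 1"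
    using es_Delta_attained[OF assms] \<open>\<not> 0 < es_Delta G\<close> by auto
  have "F = {}"
    using F(1,2) finite_subset[OF F(1) finite_edges[OF assms(1)]] by simp
  with F(3) maxdeg_pos_if_edge[OF assms] show False
    by simp
qed

lemma inj_on_image_if_inj: "inj f \<Longrightarrow> inj_on ((`) f) A"
  by (simp add: inj_on_def inj_image_eq_iff)

definition subgraph_embedding :: "('a \<Rightarrow> 'b) \<Rightarrow> 'a graph \<Rightarrow> 'b graph \<Rightarrow> bool" where
  "subgraph_embedding f G H \<longleftrightarrow>
     inj f \<and> f ` verts G \<subseteq> verts H \<and> (\<forall>e \<in> edges G. f ` e \<in> edges H)"

lemma degree_le_degree_embedding:
  assumes emb: "subgraph_embedding f G H" and fin: "finite (edges H)"
  shows "degree (verts G, edges G - {e \<in> edges G. f ` e \<in> F}) v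
           \<le> degree (verts H, edges H - F) (f v)"
proof -
  let ?A = "{e \<in> edges G - {e \<in> edges G. f ` e \<in> F}. v \<in> e}"
  have inj: "inj_on ((`) f) ?A"
    using emb by (simp add: subgraph_embedding_def inj_on_image_if_inj)
  have "(`) f ` ?A \<subseteq> {e \<in> edges H - F. f v \<in> e}"
    using emb by (auto simp: subgraph_embedding_def)
  have "degree (verts G, edges G - {e \<in> edges G. f ` e \<in> F}) v = card ?A"
    by (simp add: degree_def)
  also have "\<dots> = card ((`) f ` ?A)"
    using card_image[OF inj] by simp
  also have "\<dots> \<le> card {e \<in> edges H - F. f v \<in> e}"
    using fin \<open>(`) f ` ?A \<subseteq> _\<close> by (intro card_mono) auto
  also have "\<dots> = degree (verts H, edges H - F) (f v)"
    by (simp add: degree_def)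
  finally show ?thesis .
qed

lemma es_Delta_le_embedding:
  assumes emb: "subgraph_embedding f G H"
    and G: "finite_simple_graph G" "edges G \<noteq> {}"
    and H: "finite_simple_graph H" "maxdeg H \<le> maxdeg G"
    and F: "maxdeg (verts H, edges H - F) \<le> maxdeg H - 1"
  shows "es_Delta G \<le> card (F \<inter> (`) f ` edges G)"
proof -
  define F' where "F' = {e \<in> edges G. f ` e \<in> F}"
  have "maxdeg (verts G, edges G - F') \<le> maxdeg G - 1"
  proof (rule maxdeg_leI)
    fix v assume "v \<in> verts (verts G, edges G - F')"
    then have "f v \<in> verts H"
      using emb by (auto simp: subgraph_embedding_def)
    then have "degree (verts H, edges H - F) (f v) \<le> maxdeg (verts H, edges H - F)"
      using finite_verts[OF H(1)] by (simp add: degree_le_maxdeg)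
    then show "degree (verts G, edges G - F') v \<le> maxdeg G - 1"
      using degree_le_degree_embedding[OF emb finite_edges[OF H(1)], of F v] F H(2)
      unfolding F'_def by linarith
  qed (use finite_verts[OF G(1)] verts_nonempty_if_edge[OF G] in auto)
  then have "es_Delta G \<le> card F'"
    using G by (intro es_Delta_le_card) (auto simp: F'_def)
  also have "card F' = card ((`) f ` F')"
    using emb by (simp add: subgraph_embedding_def inj_on_image_if_inj card_image)
  also have "(`) f ` F' = F \<inter> (`) f ` edges G"
    by (auto simp: F'_def)
  finally show ?thesis .
qed

definition map_graph :: "('a \<Rightarrow> 'b) \<Rightarrow> 'a graph \<Rightarrow> 'b graph" where
  "map_graph f G = (f ` verts G, (`) f ` edges G)"

lemma verts_map_graph [simp]: "verts (map_graph f G) = f ` verts G"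
  by (simp add: map_graph_def)

lemma edges_map_graph [simp]: "edges (map_graph f G) = (`) f ` edges G"
  by (simp add: map_graph_def)

lemma lift_eq_map_graph: "lift G = map_graph (\<lambda>v. (v, [])) G"
  by (simp add: lift_def map_graph_def)

lemma subgraph_embedding_map_graph: "inj f \<Longrightarrow> subgraph_embedding f G (map_graph f G)"
  by (simp add: subgraph_embedding_def)

lemma finite_simple_graph_map_graph:
  assumes "inj f" "finite_simple_graph G"
  shows "finite_simple_graph (map_graph f G)"
  unfolding finite_simple_graph_def
proof (intro conjI ballI)
  show "finite (verts (map_graph f G))"
    using assms(2) by (simp add: finite_verts)
next
  fix e' assume "e' \<in> edges (map_graph f G)"
  then obtain e where e: "e \<in> edges G" "e' = f ` e"
    by auto
  then obtain u v where "e = {u, v}" "u \<noteq> v" "u \<in> verts G" "v \<in> verts G"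
    using assms(2) unfolding finite_simple_graph_def by blast
  then show "\<exists>u v. e' = {u, v} \<and> u \<noteq> v \<and> u \<in> verts (map_graph f G) \<and> v \<in> verts (map_graph f G)"
    using e(2) inj_eq[OF assms(1)] by (intro exI[of _ "f u"] exI[of _ "f v"]) auto
qed

lemma card_verts_map_graph: "inj f \<Longrightarrow> card (verts (map_graph f G)) = card (verts G)"
  by (simp add: card_image inj_on_subset)

lemma degree_map_graph:
  assumes "inj f"
  shows "degree (map_graph f G) (f v) = degree G v"
proof -
  have "{e \<in> (`) f ` edges G. f v \<in> e} = (`) f ` {e \<in> edges G. f v \<in> f ` e}"
    by blast
  also have "\<dots> = (`) f ` {e \<in> edges G. v \<in> e}"
    by (simp add: inj_image_mem_iff[OF assms])
  finally have "{e \<in> (`) f ` edges G. f v \<in> e} = (`) f ` {e \<in> edges G. v \<in> e}" .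
  moreover have "inj_on ((`) f) {e \<in> edges G. v \<in> e}"
    using assms by (rule inj_on_image_if_inj)
  ultimately show ?thesis
    by (simp add: degree_def card_image)
qed

lemma maxdeg_map_graph: "inj f \<Longrightarrow> maxdeg (map_graph f G) = maxdeg G"
  by (simp add: maxdeg_def image_comp comp_def degree_map_graph)

lemma es_Delta_le_map_graph:
  assumes f: "inj f" and G: "finite_simple_graph G" "edges G \<noteq> {}"
  shows "es_Delta G \<le> es_Delta (map_graph f G)"
proof -
  let ?H = "map_graph f G"
  have H: "finite_simple_graph ?H" "edges ?H \<noteq> {}"
    using finite_simple_graph_map_graph[OF f G(1)] G(2) by auto
  obtain F where F: "F \<subseteq> edges ?H" "card F = es_Delta ?H"
    "maxdeg (verts ?H, edges ?H - F) = maxdeg ?H - 1"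
    using es_Delta_attained[OF H] .
  have "es_Delta G \<le> card (F \<inter> (`) f ` edges G)"
    using F(3) by (intro es_Delta_le_embedding[OF subgraph_embedding_map_graph[OF f] G H(1)])
      (simp_all add: maxdeg_map_graph[OF f])
  also have "\<dots> \<le> card F"
    using finite_subset[OF F(1) finite_edges[OF H(1)]] by (intro card_mono) auto
  finally show ?thesis
    using F(2) by simp
qed

definition tag :: "bool \<Rightarrow> 'a \<times> bool list \<Rightarrow> 'a \<times> bool list" where
  "tag b = (\<lambda>(v, bs). (v, b # bs))"

definition twin_edge :: "'a \<times> bool list \<Rightarrow> ('a \<times> bool list) set" where
  "twin_edge x = {tag True x, tag False x}"

lemma tag_eq_iff [simp]: "tag b x = tag c y \<longleftrightarrow> b = c \<and> x = y"
  by (cases x; cases y) (auto simp: tag_def)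

lemma tag_in_tag_image_iff [simp]: "tag b x \<in> tag c ` A \<longleftrightarrow> b = c \<and> x \<in> A"
  by auto

lemma tag_in_twin_edge_iff [simp]: "tag b x \<in> twin_edge y \<longleftrightarrow> x = y"
  by (cases b) (auto simp: twin_edge_def)

lemma tag_image_neq: "A \<noteq> {} \<Longrightarrow> tag True ` A \<noteq> tag False ` B"
  by (metis ex_in_conv imageI tag_in_tag_image_iff)

lemma inj_tag: "inj (tag b)"
  by (simp add: inj_def)

lemma verts_double: "verts (double G) = tag True ` verts G \<union> tag False ` verts G"
proof -
  have "verts (double G) = (\<Union>b. tag b ` verts G)"
    by (force simp: double_def verts_def tag_def)
  then show ?thesis
    by (auto simp: UNIV_bool)
qed

lemma edges_double:
  "edges (double G) =
     (`) (tag True) ` edges G \<union> (`) (tag False) ` edges G \<union> twin_edge ` (verts G - core G)"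
proof -
  have "{tag b ` e | e b. e \<in> edges G} = (\<Union>b. (`) (tag b) ` edges G)"
    by blast
  also have "\<dots> = (`) (tag True) ` edges G \<union> (`) (tag False) ` edges G"
    by (auto simp: UNIV_bool)
  finally have copies: "{tag b ` e | e b. e \<in> edges G} = \<dots>" .
  have "{{(v, True # bs), (v, False # bs)} | v bs. (v, bs) \<in> verts G - core G}
          = twin_edge ` (verts G - core G)"
    by (force simp: twin_edge_def tag_def)
  with copies show ?thesis
    by (simp add: double_def edges_def verts_def flip: tag_def)
qed

lemma edges_double_nonempty: "edges G \<noteq> {} \<Longrightarrow> edges (double G) \<noteq> {}"
  by (simp add: edges_double)

lemma card_verts_double:
  assumes "finite (verts G)"
  shows "card (verts (double G)) = 2 * card (verts G)"
proof -
  have "tag True ` verts G \<inter> tag False ` verts G = {}"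
    by auto
  then show ?thesis
    using assms by (simp add: verts_double card_Un_disjoint card_image inj_on_subset[OF inj_tag])
qed

lemma subgraph_embedding_tag: "subgraph_embedding (tag b) G (double G)"
  unfolding subgraph_embedding_def verts_double edges_double
  using inj_tag by (cases b) auto

lemma finite_simple_graph_double:
  assumes "finite_simple_graph G"
  shows "finite_simple_graph (double G)"
  unfolding finite_simple_graph_def
proof (intro conjI ballI)
  show "finite (verts (double G))"
    using finite_verts[OF assms] by (simp add: verts_double)
next
  fix e assume "e \<in> edges (double G)"
  then consider (copy) b e0 where "e0 \<in> edges G" "e = tag b ` e0"
    | (twin) x where "x \<in> verts G" "e = twin_edge x"
    unfolding edges_double by blast
  then show "\<exists>u v. e = {u, v} \<and> u \<noteq> v \<and> u \<in> verts (double G) \<and> v \<in> verts (double G)"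
  proof cases
    case copy
    then obtain u v where "e0 = {u, v}" "u \<noteq> v" "u \<in> verts G" "v \<in> verts G"
      using assms unfolding finite_simple_graph_def by blast
    with copy show ?thesis
      by (intro exI[of _ "tag b u"] exI[of _ "tag b v"]) (cases b; simp add: verts_double)
  next
    case twin
    then show ?thesis
      by (intro exI[of _ "tag True x"] exI[of _ "tag False x"]) (simp add: verts_double twin_edge_def)
  qed
qed

lemma degree_double_tag_le:
  assumes G: "finite_simple_graph G" and x: "x \<in> verts G"
  shows "degree (double G) (tag b x) \<le> maxdeg G"
proof -
  let ?A = "(`) (tag b) ` {e \<in> edges G. x \<in> e}"
  let ?B = "if x \<in> core G then {} else {twin_edge x}"
  have "{e \<in> edges (double G). tag b x \<in> e} \<subseteq> ?A \<union> ?B"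
    unfolding edges_double using x by (cases b) auto
  then have "degree (double G) (tag b x) \<le> card (?A \<union> ?B)"
    unfolding degree_def using finite_edges[OF G] by (intro card_mono) auto
  also have "\<dots> \<le> card ?A + card ?B"
    by (rule card_Un_le)
  also have "card ?A = degree G x"
    unfolding degree_def by (intro card_image inj_on_image_if_inj inj_tag)
  also have "degree G x + card ?B \<le> maxdeg G"
  proof (cases "x \<in> core G")
    case True
    then show ?thesis
      using degree_le_maxdeg[OF finite_verts[OF G] x] by simp
  next
    case False
    then have "degree G x < maxdeg G"
      using degree_le_maxdeg[OF finite_verts[OF G] x] x by (auto simp: core_def)
    with False show ?thesis
      by simp
  qed
  finally show ?thesis .
qed

lemma maxdeg_double_le:
  assumes "finite_simple_graph G" "verts G \<noteq> {}"
  shows "maxdeg (double G) \<le> maxdeg G"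
proof (rule maxdeg_leI)
  show "finite (verts (double G))" "verts (double G) \<noteq> {}"
    using finite_verts[OF assms(1)] assms(2) by (auto simp: verts_double)
  fix y assume "y \<in> verts (double G)"
  then obtain b x where "x \<in> verts G" "y = tag b x"
    unfolding verts_double by blast
  then show "degree (double G) y \<le> maxdeg G"
    using degree_double_tag_le[OF assms(1)] by simp
qed

lemma es_Delta_double:
  assumes G: "finite_simple_graph G" "edges G \<noteq> {}"
  shows "2 * es_Delta G \<le> es_Delta (double G)"
proof -
  have D: "finite_simple_graph (double G)" "edges (double G) \<noteq> {}"
    using finite_simple_graph_double[OF G(1)] edges_double_nonempty[OF G(2)] .
  obtain F where F: "F \<subseteq> edges (double G)" "card F = es_Delta (double G)"
    "maxdeg (verts (double G), edges (double G) - F) = maxdeg (double G) - 1"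
    using es_Delta_attained[OF D] .
  let ?F = "\<lambda>b. F \<inter> (`) (tag b) ` edges G"
  have copy: "es_Delta G \<le> card (?F b)" for b
    using es_Delta_le_embedding[OF subgraph_embedding_tag G D(1)
        maxdeg_double_le[OF G(1) verts_nonempty_if_edge[OF G]]] F(3)
    by simp
  have "?F True \<inter> ?F False = {}"
  proof (rule equals0I)
    fix e assume "e \<in> ?F True \<inter> ?F False"
    then obtain e1 e2 where "e1 \<in> edges G" "tag True ` e1 = tag False ` e2"
      by auto
    then show False
      using tag_image_neq edge_nonempty[OF G(1)] by metis
  qed
  moreover have "finite F"
    using finite_subset[OF F(1) finite_edges[OF D(1)]] .
  ultimately have "card (?F True) + card (?F False) = card (?F True \<union> ?F False)"
    by (intro card_Un_disjoint[symmetric]) auto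
  also have "\<dots> \<le> card F"
    using \<open>finite F\<close> by (intro card_mono) auto
  finally show ?thesis
    using copy[of True] copy[of False] F(2) by linarith
qed

lemma finite_simple_graph_funpow_double:
  "finite_simple_graph G \<Longrightarrow> finite_simple_graph ((double ^^ k) G)"
  by (induction k) (simp_all add: finite_simple_graph_double)

lemma edges_funpow_double_nonempty: "edges G \<noteq> {} \<Longrightarrow> edges ((double ^^ k) G) \<noteq> {}"
  by (induction k) (simp_all add: edges_double_nonempty)

lemma card_verts_funpow_double:
  assumes "finite_simple_graph G"
  shows "card (verts ((double ^^ k) G)) = 2 ^ k * card (verts G)"
proof (induction k)
  case (Suc k)
  then show ?case
    using card_verts_double[OF finite_verts[OF finite_simple_graph_funpow_double[OF assms]]]
    by simp
qed simp

lemma es_Delta_funpow_double: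
  assumes "finite_simple_graph G" "edges G \<noteq> {}"
  shows "2 ^ k * es_Delta G \<le> es_Delta ((double ^^ k) G)"
proof (induction k)
  case (Suc k)
  have "2 ^ Suc k * es_Delta G \<le> 2 * es_Delta ((double ^^ k) G)"
    using Suc.IH by simp
  also have "\<dots> \<le> es_Delta ((double ^^ Suc k) G)"
    using es_Delta_double[OF finite_simple_graph_funpow_double[OF assms(1)]
        edges_funpow_double_nonempty[OF assms(2)]]
    by simp
  finally show ?case .
qed simp

theorem lemma3p1:
  fixes G :: "'a graph"
  assumes "finite_simple_graph G"
    and "edges G \<noteq> {}"
  shows "real (card (verts (regularization (lift G)))) / real (es_Delta (regularization (lift G)))
           \<le> real (card (verts G)) / real (es_Delta G)"
proof -
  define f :: "'a \<Rightarrow> 'a \<times> bool list" where "f = (\<lambda>v. (v, []))"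
  have f: "inj f" and L: "lift G = map_graph f G"
    by (simp_all add: f_def inj_def lift_eq_map_graph)
  have L_graph: "finite_simple_graph (lift G)" "edges (lift G) \<noteq> {}"
    using finite_simple_graph_map_graph[OF f assms(1)] assms(2) by (simp_all add: L)
  define k where "k = maxdeg (lift G) - mindeg (lift G)"
  have R: "regularization (lift G) = (double ^^ k) (lift G)"
    by (simp add: regularization_def k_def)
  have card_R: "card (verts (regularization (lift G))) = 2 ^ k * card (verts G)"
    unfolding R using card_verts_funpow_double[OF L_graph(1)] card_verts_map_graph[OF f]
    by (simp add: L)
  have "2 ^ k * es_Delta G \<le> 2 ^ k * es_Delta (lift G)"
    using es_Delta_le_map_graph[OF f assms] by (simp add: L)
  also have "\<dots> \<le> es_Delta (regularization (lift G))"
    unfolding R by (rule es_Delta_funpow_double[OF L_graph])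
  finally have es_R: "real (2 ^ k * es_Delta G) \<le> real (es_Delta (regularization (lift G)))"
    by linarith
  have "real (2 ^ k * card (verts G)) / real (es_Delta (regularization (lift G)))
      \<le> real (2 ^ k * card (verts G)) / real (2 ^ k * es_Delta G)"
    using es_R es_Delta_pos[OF assms] by (intro frac_le) simp_all
  then show ?thesis
    by (simp add: card_R)
qed

end
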